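(* For every integer $q\ge2$, $S_q(q):=\sum_{l_1,l_2\in\mathbb Z}H_q(l_1,l_2,q)=0$.
   Context: $(z)_k=z(z+1)\cdots(z+k-1)$ denotes the rising factorial. For integers $l_1,l_2,k$ and $q\ge1$, \[ H_q(l_{1},l_{2},k)=\frac{(-1)^{l_1+l_2}\left(-\frac{1}{2}\right)_{l_1} \left(-\frac{1}{2}\right)_{l_2} \left(\frac{1}{2}\right)_{q-l_{1}} \left(\frac{1}{2}\right)_{q-l_{2}}}{(2q-l_{1}-l_{2}-k)!\,(l_{2}-l_{1}+k)!\,(l_{1}-l_{2}+k)!\,(l_{1}+l_{2}-k)!}, \] where Pochhammer symbols and factorials are expressed via the Gamma function, with $1/\Gamma$ vanishing at non-positive integers (so only finitely many terms are non-zero). *)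

theory Defs
  imports "HOL-Analysis.Analysis"
begin

definition poch_int :: "real \<Rightarrow> int \<Rightarrow> real" where
  "poch_int a l = Gamma (a + of_int l) / Gamma a"

text \<open>Reciprocal factorial 1/n! = 1/Gamma(n+1), vanishing at negative integers n.\<close>
definition rfact :: "int \<Rightarrow> real" where
  "rfact n = rGamma (of_int n + 1)"

definition H :: "int \<Rightarrow> int \<Rightarrow> int \<Rightarrow> int \<Rightarrow> real" where
  "H q l1 l2 k =
     (-1) powi (l1 + l2) * poch_int (-1/2) l1 * poch_int (-1/2) l2
       * poch_int (1/2) (q - l1) * poch_int (1/2) (q - l2)
       * rfact (2*q - l1 - l2 - k) * rfact (l2 - l1 + k)
       * rfact (l1 - l2 + k) * rfact (l1 + l2 - k)"

end

theory Submission
  imports Defs "HOL-Computational_Algebra.Formal_Power_Series"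
begin

text \<open>The reciprocal factorials kill every term with (l1, l2) off the antidiagonal
  l1 + l2 = q, 0 \<le> l1 \<le> q. On it two of them become 1/0! and the remaining factors
  split as (-1)^q d(l1) d(l2) with d(l) = (-1/2)_l (1/2)_l / (2l)!. The duplication
  formula (2l)! = 4^l l! (1/2)_l turns d(l) into binom(1/2, l) (-1/4)^l, the
  coefficients of sqrt(1 - x/4). Hence S_q(q) = 4^-q binom(1, q) by Vandermonde's
  identity, which vanishes for q \<ge> 2: the square of sqrt(1 - x/4) is linear.\<close>

lemma rfact_neg: "n < 0 \<Longrightarrow> rfact n = 0"
  unfolding rfact_def rGamma_eq_zero_iff
  by (metis add.commute nonpos_Ints_of_int of_int_1 of_int_add zle_add1_eq_le not_less)

lemma rfact_of_nat: "rfact (int n) = 1 / fact n"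
proof -
  have "rfact (int n) = inverse (Gamma (1 + of_nat n))"
    unfolding rfact_def Gamma_def by (simp add: add.commute)
  then show ?thesis by (simp add: Gamma_fact divide_inverse)
qed

lemma poch_int_of_nat:
  assumes "a \<notin> \<int>\<^sub>\<le>\<^sub>0"
  shows "poch_int a (int n) = pochhammer a n"
  unfolding poch_int_def using pochhammer_Gamma[OF assms, of n] by simp

lemma pochhammer_mult_pochhammer_half_div_fact_double:
  fixes a :: "'a :: field_char_0"
  shows "pochhammer (- a) l * pochhammer (1/2) l / fact (2 * l) = (a gchoose l) * (- 1/4) ^ l"
proof -
  have "pochhammer (1/2 :: 'a) l \<noteq> 0"
  proof
    assume "pochhammer (1/2 :: 'a) l = 0"
    then obtain k where "1/2 = - (of_nat k :: 'a)"
      by (auto simp: pochhammer_eq_0_iff)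
    then have "of_nat (2 * k + 1) = (0 :: 'a)"
      by (simp add: field_simps eq_neg_iff_add_eq_0)
    then show False
      by (simp only: of_nat_eq_0_iff)
  qed
  moreover have "fact (2 * l) = 4 ^ l * pochhammer (1/2) l * (fact l :: 'a)"
    by (simp add: fact_double power_mult)
  ultimately show ?thesis
    by (simp add: gbinomial_pochhammer power_minus' field_simps)
qed

lemma H_off_antidiagonal:
  assumes "\<not> (l1 + l2 = q \<and> 0 \<le> l1 \<and> l1 \<le> q)"
  shows "H q l1 l2 q = 0"
proof -
  have "2*q - l1 - l2 - q < 0 \<or> l2 - l1 + q < 0 \<or> l1 - l2 + q < 0 \<or> l1 + l2 - q < 0"
    using assms by linarith
  then show ?thesis unfolding H_def using rfact_neg by auto
qed

lemma H_on_antidiagonal: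
  assumes "i \<le> n"
  shows "H (int n) (int i) (int n - int i) (int n)
    = (1/4) ^ n * ((1/2 gchoose i) * (1/2 gchoose (n - i)))"
proof -
  have not_nonpos_int: "(1/2::real) \<notin> \<int>\<^sub>\<le>\<^sub>0" "(-1/2::real) \<notin> \<int>\<^sub>\<le>\<^sub>0"
    by force+
  define d :: "nat \<Rightarrow> real" where "d l = pochhammer (-1/2) l * pochhammer (1/2) l / fact (2 * l)" for l
  have d_gchoose: "d l = (1/2 gchoose l) * (- 1/4) ^ l" for l
    using pochhammer_mult_pochhammer_half_div_fact_double[of "1/2 :: real" l] by (simp add: d_def)
  have antidiagonal_args: "int n - int i = int (n - i)" "2 * int n - int i - int (n - i) - int n = int 0"
    "int (n - i) - int i + int n = int (2 * (n - i))" "int i - int (n - i) + int n = int (2 * i)"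
    "int i + int (n - i) - int n = int 0" "int n - int (n - i) = int i"
    using assms by simp_all
  have "H (int n) (int i) (int n - int i) (int n) = (-1) ^ n * (d i * d (n - i))"
    unfolding H_def antidiagonal_args d_def rfact_of_nat poch_int_of_nat[OF not_nonpos_int(1)]
      poch_int_of_nat[OF not_nonpos_int(2)]
    using assms by (simp add: power_int_of_nat mult_ac flip: of_nat_add)
  also have "\<dots> = (1/4) ^ n * ((1/2 gchoose i) * (1/2 gchoose (n - i)))"
    using assms by (simp add: d_gchoose power_add[symmetric] power_mult_distrib[symmetric])
  finally show ?thesis .
qed

lemma has_sum_supported_on_antidiagonal:
  fixes f :: "int \<Rightarrow> int \<Rightarrow> 'a :: {comm_monoid_add, topological_space}"
  assumes "\<And>l1 l2. \<not> (l1 + l2 = int n \<and> 0 \<le> l1 \<and> l1 \<le> int n) \<Longrightarrow> f l1 l2 = 0"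
  shows "((\<lambda>(l1, l2). f l1 l2) has_sum (\<Sum>i\<le>n. f (int i) (int n - int i))) UNIV"
proof (rule has_sum_finite_neutralI)
  let ?antidiagonal = "(\<lambda>i. (int i, int n - int i)) ` {..n}"
  show "finite ?antidiagonal" by simp
  show "?antidiagonal \<subseteq> UNIV" by simp
  show "(\<lambda>(l1, l2). f l1 l2) x = 0" if "x \<in> UNIV - ?antidiagonal" for x
  proof -
    obtain l1 l2 where x: "x = (l1, l2)" by fastforce
    have "\<not> (l1 + l2 = int n \<and> 0 \<le> l1 \<and> l1 \<le> int n)"
    proof
      assume "l1 + l2 = int n \<and> 0 \<le> l1 \<and> l1 \<le> int n"
      then have "x \<in> ?antidiagonal"
        unfolding x by (auto intro!: image_eqI[where x = "nat l1"])
      then show False using that by simp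
    qed
    then show ?thesis using assms x by simp
  qed
  show "(\<Sum>i\<le>n. f (int i) (int n - int i)) = (\<Sum>x\<in>?antidiagonal. (\<lambda>(l1, l2). f l1 l2) x)"
    by (subst sum.reindex) (auto simp: inj_on_def)
qed

theorem lemma7p4:
  fixes q :: int
  assumes "q \<ge> 2"
  shows "((\<lambda>(l1, l2). H q l1 l2 q) has_sum 0) (UNIV :: (int \<times> int) set)"
proof -
  obtain n where q: "q = int n" and "n \<ge> 2"
    using assms by (intro that[of "nat q"]) auto
  have "(\<Sum>i\<le>n. H q (int i) (q - int i) q)
      = (1/4) ^ n * (\<Sum>i\<le>n. (1/2 gchoose i) * (1/2 gchoose (n - i)))"
    unfolding q sum_distrib_left by (intro sum.cong) (simp_all add: H_on_antidiagonal)
  also have "\<dots> = (1/4) ^ n * (1 gchoose n)"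
    using gbinomial_Vandermonde[of "1/2 :: real" "1/2" n] by (simp add: atLeast0AtMost)
  also have "\<dots> = 0"
    using \<open>n \<ge> 2\<close> binomial_gbinomial[of 1 n, where 'a = real] by (simp add: binomial_eq_0)
  finally have "(\<Sum>i\<le>n. H q (int i) (q - int i) q) = 0" .
  moreover have "((\<lambda>(l1, l2). H q l1 l2 q) has_sum (\<Sum>i\<le>n. H q (int i) (q - int i) q)) UNIV"
    unfolding q by (rule has_sum_supported_on_antidiagonal) (rule H_off_antidiagonal)
  ultimately show ?thesis by simp
qed

end
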